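(* Let $q$ be a prime power and $r,k\ge 2$ integers, $n=rk$. Let $g_{r,k}:\mathbb{F}_q^n\to\mathbb{F}_q$, $g_{r,k}(x_1,\dots,x_n)=\sum_{j=0}^{k-1}x_{jr+1}x_{jr+2}\cdots x_{jr+r}$. Then the linear code $$\mathcal{C}_{g_{r,k}}=\{(u\,g_{r,k}(x)+v\cdot x)_{x\in\mathbb{F}_q^n\setminus\{0\}}\ :\ u\in\mathbb{F}_q,\ v\in\mathbb{F}_q^n\}$$ satisfies Property (P).
   Context: Here $v\cdot x$ denotes the standard inner product $\sum_i v_ix_i$, and coordinates of codewords are indexed by the nonzero vectors $x\in\mathbb{F}_q^n$ in some fixed order. Property (P): every nonzero codeword $w=(w_1,\dots,w_N)$ satisfies $\{w_1,\dots,w_N\}=\mathbb{F}_q$, i.e. its coordinates take all $q$ values of $\mathbb{F}_q$. *)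

theory Defs
  imports Main
begin

text \<open>Vectors of F_q^n are modelled as functions nat => 'a supported on {0..<n}
  (coordinates 0..n-1, i.e. x_1..x_n shifted by one).\<close>

definition vecs :: "nat \<Rightarrow> (nat \<Rightarrow> 'a::zero) set" where
  "vecs n = {x. \<forall>i. n \<le> i \<longrightarrow> x i = 0}"

definition nonzero_vecs :: "nat \<Rightarrow> (nat \<Rightarrow> 'a::zero) set" where
  "nonzero_vecs n = vecs n - {(\<lambda>_. 0)}"

definition dotp :: "nat \<Rightarrow> (nat \<Rightarrow> 'a::comm_semiring_1) \<Rightarrow> (nat \<Rightarrow> 'a) \<Rightarrow> 'a" where
  "dotp n v x = (\<Sum>i<n. v i * x i)"

definition g_rk :: "nat \<Rightarrow> nat \<Rightarrow> (nat \<Rightarrow> 'a::comm_semiring_1) \<Rightarrow> 'a" where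
  "g_rk r k x = (\<Sum>j<k. \<Prod>i<r. x (j * r + i))"

definition code_of :: "nat \<Rightarrow> ((nat \<Rightarrow> 'a::comm_semiring_1) \<Rightarrow> 'a) \<Rightarrow> ((nat \<Rightarrow> 'a) \<Rightarrow> 'a) set" where
  "code_of n f = {(\<lambda>x. u * f x + dotp n v x) | u v. v \<in> vecs n}"

definition property_P :: "'b set \<Rightarrow> ('b \<Rightarrow> 'a::zero) set \<Rightarrow> bool" where
  "property_P I C = (\<forall>w\<in>C. (\<exists>x\<in>I. w x \<noteq> 0) \<longrightarrow> w ` I = UNIV)"

end

theory Submission
  imports Defs
begin

text \<open>A nonzero codeword takes every value on the nonzero vectors because it is affine with
  nonzero slope along some line of nonzero vectors. If u = 0 the codeword is a nonzero linear
  form v \<cdot> x, and the line t e_i + e_j with v_i \<noteq> 0 and j \<noteq> i works. If u \<noteq> 0, take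
  x = (t, s, 1, \<dots>, 1, 0, \<dots>) with ones exactly in x_3, \<dots>, x_{r+1}: then x \<noteq> 0, every block
  but the first contains the zero x_{jr+2}, so g_{r,k}(x) = t s, and the codeword is
  (u s + v_1) t + const, where s = (u - v_1)/u makes the slope u.\<close>

lemma image_eq_UNIV_if_affine_on_line:
  fixes w :: "'b \<Rightarrow> 'a::field"
  assumes "\<And>t. x t \<in> I" and "\<And>t. w (x t) = a * t + b" and "a \<noteq> 0"
  shows "w ` I = UNIV"
proof (intro set_eqI iffI UNIV_I)
  fix c :: 'a
  have "w (x ((c - b) / a)) = c" using assms(2,3) by simp
  then show "c \<in> w ` I" using assms(1) by (metis image_eqI)
qed

lemma dotp_fun_upd:
  assumes "i < n"
  shows "dotp n v (x(i := t)) = v i * t + dotp n v (x(i := 0))"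
proof -
  have "(\<Sum>m\<in>{..<n} - {i}. v m * (x(i := t)) m) = (\<Sum>m\<in>{..<n} - {i}. v m * (x(i := 0)) m)"
    by (intro sum.cong) auto
  then show ?thesis
    using assms unfolding dotp_def by (simp add: sum.remove[of "{..<n}" i])
qed

lemma dotp_nonzero_imp_coeff_nonzero:
  assumes "dotp n v x \<noteq> 0"
  obtains i where "i < n" "v i \<noteq> 0"
proof -
  from assms obtain i where "i < n" "v i * x i \<noteq> 0"
    unfolding dotp_def by (meson lessThan_iff sum.neutral)
  then show thesis using that by (metis mult_zero_left)
qed

lemma g_rk_eq_first_block:
  assumes "1 < r" and "0 < k" and "\<And>j. 1 \<le> j \<Longrightarrow> j < k \<Longrightarrow> x (j * r + 1) = 0"
  shows "g_rk r k x = (\<Prod>i<r. x i)"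
proof -
  have "(\<Prod>i<r. x (j * r + i)) = 0" if "j \<in> {..<k} - {0}" for j
    using that assms(1,3) by (intro prod_zero bexI[of _ 1]) auto
  then have "(\<Sum>j\<in>{..<k} - {0}. \<Prod>i<r. x (j * r + i)) = 0"
    by (intro sum.neutral) blast
  then show ?thesis
    unfolding g_rk_def using assms(2) by (simp add: sum.remove[of "{..<k}" 0])
qed

lemma in_nonzero_vecs:
  assumes "\<And>i. n \<le> i \<Longrightarrow> x i = 0" and "m < n" and "x m \<noteq> 0"
  shows "x \<in> nonzero_vecs n"
  using assms unfolding nonzero_vecs_def vecs_def by auto

lemma linear_form_image_nonzero_vecs:
  fixes v :: "nat \<Rightarrow> 'a::field"
  assumes "2 \<le> n" and "i < n" and "v i \<noteq> 0"
  shows "dotp n v ` nonzero_vecs n = UNIV"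
proof -
  define j where "j = (if i = 0 then 1 else 0 :: nat)"
  have j: "j < n" "j \<noteq> i" using assms(1) by (auto simp: j_def)
  define e where "e = (\<lambda>_. 0 :: 'a)(j := 1)"
  show ?thesis
  proof (rule image_eq_UNIV_if_affine_on_line)
    show "e(i := t) \<in> nonzero_vecs n" for t
      using assms(2) j by (intro in_nonzero_vecs[of n _ j]) (auto simp: e_def)
    show "dotp n v (e(i := t)) = v i * t + dotp n v (e(i := 0))" for t
      using assms(2) by (rule dotp_fun_upd)
  qed fact
qed

lemma quadratic_codeword_image_nonzero_vecs:
  fixes v :: "nat \<Rightarrow> 'a::field"
  assumes "2 \<le> r" and "2 \<le> k" and "u \<noteq> 0"
  shows "(\<lambda>x. u * g_rk r k x + dotp (r * k) v x) ` nonzero_vecs (r * k) = UNIV"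
proof -
  let ?n = "r * k"
  have "r < ?n" using assms by simp
  define s where "s = (u - v 0) / u"
  define y :: "nat \<Rightarrow> 'a" where "y = (\<lambda>i. if i \<le> r then 1 else 0)"
  define x where "x t = y(1 := s, 0 := t)" for t
  have g: "g_rk r k (x t) = t * s" for t
  proof -
    have "x t (j * r + 1) = 0" if "1 \<le> j" for j
      using that assms(1) by (cases j) (auto simp: x_def y_def)
    then have "g_rk r k (x t) = (\<Prod>i<r. x t i)"
      using assms by (intro g_rk_eq_first_block) auto
    also have "\<dots> = t * s * (\<Prod>i\<in>{2..<r}. x t i)"
    proof -
      have "{..<r} = insert 0 (insert 1 {2..<r})" using assms(1) by auto
      then show ?thesis by (simp add: x_def)
    qed
    also have "(\<Prod>i\<in>{2..<r}. x t i) = 1" by (intro prod.neutral) (auto simp: x_def y_def)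
    finally show ?thesis by simp
  qed
  have "u * s + v 0 = u" using assms(3) by (simp add: s_def field_simps)
  have "u * g_rk r k (x t) + dotp ?n v (x t) = u * t + dotp ?n v (x 0)" for t
  proof -
    have "dotp ?n v (x t) = v 0 * t + dotp ?n v (x 0)"
      unfolding x_def using \<open>r < ?n\<close> by (intro dotp_fun_upd) simp
    then have "u * g_rk r k (x t) + dotp ?n v (x t) = (u * s + v 0) * t + dotp ?n v (x 0)"
      by (simp add: g algebra_simps)
    with \<open>u * s + v 0 = u\<close> show ?thesis by simp
  qed
  moreover have "x t \<in> nonzero_vecs ?n" for t
  proof (rule in_nonzero_vecs[OF _ \<open>r < ?n\<close>])
    show "x t i = 0" if "?n \<le> i" for i
    proof -
      have "r < i" using that \<open>r < ?n\<close> by linarith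
      with assms(1) show ?thesis by (simp add: x_def y_def)
    qed
    show "x t r \<noteq> 0" using assms(1) by (simp add: x_def y_def)
  qed
  ultimately show ?thesis
    using assms(3) by (intro image_eq_UNIV_if_affine_on_line) auto
qed

theorem mainTheorem8:
  fixes r k :: nat
  assumes "r \<ge> 2" and "k \<ge> 2"
  shows "property_P (nonzero_vecs (r * k))
           (code_of (r * k) (g_rk r k :: (nat \<Rightarrow> 'a::{finite, field}) \<Rightarrow> 'a))"
  unfolding property_P_def
proof (intro ballI impI)
  fix w :: "(nat \<Rightarrow> 'a) \<Rightarrow> 'a"
  assume "w \<in> code_of (r * k) (g_rk r k)"
  then obtain u v where w: "w = (\<lambda>x. u * g_rk r k x + dotp (r * k) v x)"
    unfolding code_of_def by blast
  assume nonzero: "\<exists>x\<in>nonzero_vecs (r * k). w x \<noteq> 0"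
  show "w ` nonzero_vecs (r * k) = UNIV"
  proof (cases "u = 0")
    case True
    with nonzero w obtain x where "dotp (r * k) v x \<noteq> 0" by auto
    then obtain i where "i < r * k" "v i \<noteq> 0" by (rule dotp_nonzero_imp_coeff_nonzero)
    moreover have "2 \<le> r * k" using assms by (metis le_trans mult_le_mono2 mult.right_neutral one_le_numeral)
    ultimately show ?thesis
      using True w linear_form_image_nonzero_vecs by simp
  next
    case False
    then show ?thesis using w assms quadratic_codeword_image_nonzero_vecs by blast
  qed
qed

end
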